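(* Let $D$ be an $n\times n$ distance matrix and let $\mathbf X$ be a truth assignment of the variables $\{x_{i,a}: i\in[n],\ a\in\{n+1,n+2\}\}$ satisfying $\phi_2'$. Then $D'(\phi_2',\mathbf X)=D^{(3)}$.
   Context: $[n]=\{1,\dots,n\}$. An $n\times n$ matrix $D$ with non-negative integer entries is a distance matrix if (i) $D_{ii}=0$ for all $i$ and $D_{ij}>0$ for all $i\ne j$; (ii) $D$ is symmetric; (iii) $D_{iw}+D_{wj}\ge D_{ij}$ for all $i,j,w\in[n]$. The associated graph $G_D=(V_D,E_D)$ of $D$ is the simple unweighted graph with $V_D=\{v_1,\dots,v_n\}$ and $\{v_i,v_j\}\in E_D$ if and only if $D_{ij}=1$; $d_{G_D}$ is its shortest-path distance ($\infty$ if no path). For $q\in\mathbb N$, the $q$-skeleton $G^q$ of $D$ is the edge-weighted graph with vertex set $[n]$ having an edge $\{i,j\}$ ($i<j$) if and only if $D_{ij}\le q$, this edge having weight (length) $D_{ij}$; $D^{(q)}$ denotes the $n\times n$ matrix whose $(i,j)$ entry is the weighted shortest-path distance between $i$ and $j$ in $G^q$ ($\infty$ if no path exists). The Boolean formula $\phi_2'$ over variables $x_{i,a}$ ($i\in[n]$, $a\in\{n+1,n+2\}$; meaning "$v_i$ is adjacent to the new vertex $v_a$") is the conjunction (written as an equivalent 2-CNF formula) of the following constraints: (1) for all $i,j\in[n]$ with $D_{ij}>2$: $(\neg x_{i,n+1}\vee\neg x_{j,n+1})$ and $(\neg x_{i,n+2}\vee\neg x_{j,n+2})$; (2) for all $i,j\in[n]$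 with $D_{ij}=2$ and $d_{G_D}(v_i,v_j)>2$: $(x_{i,n+1}\wedge x_{j,n+1})\vee(x_{i,n+2}\wedge x_{j,n+2})$; (3) for all $i,j\in[n]$ with $D_{ij}>3$: $(\neg x_{i,n+1}\vee\neg x_{j,n+2})$ and $(\neg x_{i,n+2}\vee\neg x_{j,n+1})$; (4) for all $i,j\in[n]$ with $D_{ij}=3$ and $D^{(2)}_{ij}>3$: $(x_{i,n+1}\wedge x_{j,n+2})\vee(x_{i,n+2}\wedge x_{j,n+1})$. For a satisfying assignment $\mathbf X$, $G'_{\phi_2',\mathbf X}$ is the simple graph on $\{v_1,\dots,v_{n+2}\}$ whose induced subgraph on $\{v_1,\dots,v_n\}$ is $G_D$, in which $v_{n+1}$ and $v_{n+2}$ are adjacent, and in which $v_a$ ($a\in\{n+1,n+2\}$) is adjacent to $v_i$ ($i\in[n]$) exactly when $x_{i,a}$ is true in $\mathbf X$. $D'(\phi_2',\mathbf X)$ is the $n\times n$ matrix of shortest-path distances in $G'_{\phi_2',\mathbf X}$ between $v_i$ and $v_j$, $i,j\in[n]$ ($\infty$ if no path). *)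

theory Defs
  imports Main "HOL-Library.Extended_Nat"
begin

text \<open>Vertices are natural numbers; the original vertices are 1..n, the new
  vertices are n+1 and n+2. Distances take values in enat (\<infinity> = no path).\<close>

definition is_distance_matrix :: "nat \<Rightarrow> (nat \<Rightarrow> nat \<Rightarrow> nat) \<Rightarrow> bool" where
  "is_distance_matrix n D \<longleftrightarrow>
     (\<forall>i\<in>{1..n}. D i i = 0) \<and>
     (\<forall>i\<in>{1..n}. \<forall>j\<in>{1..n}. i \<noteq> j \<longrightarrow> D i j > 0) \<and>
     (\<forall>i\<in>{1..n}. \<forall>j\<in>{1..n}. D i j = D j i) \<and>
     (\<forall>i\<in>{1..n}. \<forall>j\<in>{1..n}. \<forall>w\<in>{1..n}. D i w + D w j \<ge> D i j)"

text \<open>Walks from i to j in the graph (V, E) and weighted shortest-path distance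
  (weights w on edges); INF over the empty set is \<infinity>.\<close>

definition walks :: "nat set \<Rightarrow> (nat \<Rightarrow> nat \<Rightarrow> bool) \<Rightarrow> nat \<Rightarrow> nat \<Rightarrow> nat list set" where
  "walks V E i j = {p. p \<noteq> [] \<and> hd p = i \<and> last p = j \<and> set p \<subseteq> V \<and>
                        (\<forall>k < length p - 1. E (p ! k) (p ! (k + 1)))}"

definition wdist :: "nat set \<Rightarrow> (nat \<Rightarrow> nat \<Rightarrow> bool) \<Rightarrow> (nat \<Rightarrow> nat \<Rightarrow> nat) \<Rightarrow> nat \<Rightarrow> nat \<Rightarrow> enat" where
  "wdist V E w i j = (INF p \<in> walks V E i j. enat (\<Sum>k < length p - 1. w (p ! k) (p ! (k + 1))))"

definition dG :: "nat \<Rightarrow> (nat \<Rightarrow> nat \<Rightarrow> nat) \<Rightarrow> nat \<Rightarrow> nat \<Rightarrow> enat" where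
  "dG n D i j = wdist {1..n} (\<lambda>a b. D a b = 1) (\<lambda>_ _. 1) i j"

definition skel_dist :: "nat \<Rightarrow> (nat \<Rightarrow> nat \<Rightarrow> nat) \<Rightarrow> nat \<Rightarrow> nat \<Rightarrow> nat \<Rightarrow> enat" where
  "skel_dist n D q i j = wdist {1..n} (\<lambda>a b. a \<noteq> b \<and> D a b \<le> q) D i j"

definition sat_phi2' :: "nat \<Rightarrow> (nat \<Rightarrow> nat \<Rightarrow> nat) \<Rightarrow> (nat \<Rightarrow> nat \<Rightarrow> bool) \<Rightarrow> bool" where
  "sat_phi2' n D X \<longleftrightarrow>
    (\<forall>i\<in>{1..n}. \<forall>j\<in>{1..n}.
      (D i j > 2 \<longrightarrow> (\<not> X i (n+1) \<or> \<not> X j (n+1)) \<and> (\<not> X i (n+2) \<or> \<not> X j (n+2))) \<and>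
      (D i j = 2 \<and> dG n D i j > 2 \<longrightarrow> (X i (n+1) \<and> X j (n+1)) \<or> (X i (n+2) \<and> X j (n+2))) \<and>
      (D i j > 3 \<longrightarrow> (\<not> X i (n+1) \<or> \<not> X j (n+2)) \<and> (\<not> X i (n+2) \<or> \<not> X j (n+1))) \<and>
      (D i j = 3 \<and> skel_dist n D 2 i j > 3 \<longrightarrow> (X i (n+1) \<and> X j (n+2)) \<or> (X i (n+2) \<and> X j (n+1))))"

definition ext_edge :: "nat \<Rightarrow> (nat \<Rightarrow> nat \<Rightarrow> nat) \<Rightarrow> (nat \<Rightarrow> nat \<Rightarrow> bool) \<Rightarrow> nat \<Rightarrow> nat \<Rightarrow> bool" where
  "ext_edge n D X u v \<longleftrightarrow>
     (u \<in> {1..n} \<and> v \<in> {1..n} \<and> D u v = 1) \<or>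
     (u = n+1 \<and> v = n+2) \<or> (u = n+2 \<and> v = n+1) \<or>
     (u \<in> {1..n} \<and> v \<in> {n+1, n+2} \<and> X u v) \<or>
     (v \<in> {1..n} \<and> u \<in> {n+1, n+2} \<and> X v u)"

definition ext_dist :: "nat \<Rightarrow> (nat \<Rightarrow> nat \<Rightarrow> nat) \<Rightarrow> (nat \<Rightarrow> nat \<Rightarrow> bool) \<Rightarrow> nat \<Rightarrow> nat \<Rightarrow> enat" where
  "ext_dist n D X i j = wdist {1..n+2} (ext_edge n D X) (\<lambda>_ _. 1) i j"

end

theory Submission
  imports Defs
begin

text \<open>An edge \<open>u\<close>--\<open>v\<close> of the 3-skeleton is simulated in \<open>G'\<close> by a walk of length at most
  \<open>D u v\<close>: directly if \<open>D u v = 1\<close>, through \<open>G\<^sub>D\<close> or the 2-skeleton when these already realise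
  the distance, and otherwise through the new vertices, which clauses (2) and (4) of \<open>\<phi>\<^sub>2'\<close>
  make adjacent to \<open>u\<close> and \<open>v\<close>. Conversely, walks of \<open>G'\<close> to a target \<open>j\<close> are bounded from below
  by a potential: an original vertex gets its distance to \<open>j\<close> in the 3-skeleton, a new vertex \<open>a\<close>
  the least such distance of an original neighbour \<open>w\<close> of a new vertex \<open>b\<close>, plus the length of
  the path from \<open>a\<close> to \<open>w\<close> through \<open>b\<close>. Clauses (1) and (3) bound \<open>D\<close> between two neighbours of
  new vertices by 2 and 3, so the potential drops by at most one along every edge of \<open>G'\<close>.\<close>

lemma Inf_enat_in: "A \<noteq> {} \<Longrightarrow> Inf A \<in> (A :: enat set)"
  unfolding Inf_enat_def by (auto intro: LeastI)

lemma INF_enat_attained: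
  fixes f :: "'a \<Rightarrow> enat"
  assumes "A \<noteq> {}"
  obtains x where "x \<in> A" "(INF y\<in>A. f y) = f x"
  using Inf_enat_in[of "f ` A"] assms by auto

fun weight :: "(nat \<Rightarrow> nat \<Rightarrow> nat) \<Rightarrow> nat list \<Rightarrow> nat" where
  "weight w (x # y # p) = w x y + weight w (y # p)"
| "weight w _ = 0"

lemma weight_eq_sum: "(\<Sum>k < length p - 1. w (p ! k) (p ! (k + 1))) = weight w p"
  by (induction w p rule: weight.induct)
    (auto simp del: sum.lessThan_Suc simp add: sum.lessThan_Suc_shift)

lemma wdist_eq_INF_weight: "wdist V E w i j = (INF p \<in> walks V E i j. enat (weight w p))"
  unfolding wdist_def weight_eq_sum ..

lemma Nil_notin_walks [simp]: "[] \<notin> walks V E i j"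
  by (simp add: walks_def)

lemma singleton_in_walks_iff [simp]: "[x] \<in> walks V E i j \<longleftrightarrow> x = i \<and> x = j \<and> x \<in> V"
  by (auto simp: walks_def)

lemma Cons_Cons_in_walks_iff [simp]:
  "x # y # p \<in> walks V E i j \<longleftrightarrow> x = i \<and> x \<in> V \<and> E x y \<and> y # p \<in> walks V E y j"
  by (auto simp: walks_def All_less_Suc2)

lemma walks_endpoints_in: "p \<in> walks V E i j \<Longrightarrow> i \<in> V \<and> j \<in> V"
  unfolding walks_def using hd_in_set last_in_set by blast

lemma wdist_le_weight: "p \<in> walks V E i j \<Longrightarrow> wdist V E w i j \<le> enat (weight w p)"
  unfolding wdist_eq_INF_weight by (rule INF_lower)

lemma wdist_cases:
  obtains "walks V E i j = {}" "wdist V E w i j = \<infinity>"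
  | p where "p \<in> walks V E i j" "wdist V E w i j = enat (weight w p)"
  unfolding wdist_eq_INF_weight by (metis INF_empty INF_enat_attained top_enat_def)

lemma wdist_refl: "i \<in> V \<Longrightarrow> wdist V E w i i = 0"
  using wdist_le_weight[of "[i]" V E i i w] by (simp flip: zero_enat_def)

lemma wdist_edge: "i \<in> V \<Longrightarrow> j \<in> V \<Longrightarrow> E i j \<Longrightarrow> wdist V E w i j \<le> enat (w i j)"
  using wdist_le_weight[of "[i, j]" V E i j w] by simp

lemma wdist_step:
  assumes "x \<in> V" "E x y"
  shows "wdist V E w x k \<le> enat (w x y) + wdist V E w y k"
proof (cases rule: wdist_cases[of V E y k w])
  case (2 p)
  then obtain r where "p = y # r" by (cases p) (auto simp: walks_def)
  with 2 assms have "x # p \<in> walks V E x k" by simp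
  from wdist_le_weight[OF this] show ?thesis using 2 \<open>p = y # r\<close> by simp
qed simp

lemma potential_le_weight:
  assumes "\<And>x y. x \<in> V \<Longrightarrow> y \<in> V \<Longrightarrow> E x y \<Longrightarrow> \<Phi> x \<le> enat (w x y) + \<Phi> y"
  shows "p \<in> walks V E i j \<Longrightarrow> \<Phi> i \<le> enat (weight w p) + \<Phi> j"
proof (induction p arbitrary: i)
  case (Cons x p)
  show ?case
  proof (cases p)
    case (Cons y r)
    with Cons.prems have "x = i" "x \<in> V" "E x y" "p \<in> walks V E y j" by auto
    moreover from this have "y \<in> V" using walks_endpoints_in by blast
    ultimately have "\<Phi> i \<le> enat (w i y) + \<Phi> y" using assms by blast
    also have "\<dots> \<le> enat (w i y) + (enat (weight w p) + \<Phi> j)"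
      using Cons.IH[OF \<open>p \<in> walks V E y j\<close>] by (rule add_left_mono)
    finally show ?thesis using \<open>x = i\<close> \<open>p = y # r\<close> by (simp flip: add.assoc)
  qed (use Cons.prems in \<open>auto simp flip: zero_enat_def\<close>)
qed simp

lemma potential_le_wdist:
  assumes "\<And>x y. x \<in> V \<Longrightarrow> y \<in> V \<Longrightarrow> E x y \<Longrightarrow> \<Phi> x \<le> enat (w x y) + \<Phi> y"
  shows "\<Phi> i \<le> wdist V E w i j + \<Phi> j"
  by (cases rule: wdist_cases[of V E i j w]) (auto intro: potential_le_weight[OF assms])

lemma wdist_triangle: "wdist V E w i k \<le> wdist V E w i j + wdist V E w j k"
  using potential_le_wdist[where \<Phi> = "\<lambda>x. wdist V E w x k", OF wdist_step] .

lemma wdist_le_wdist_of_edges: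
  assumes "V\<^sub>1 \<subseteq> V\<^sub>2"
    and "\<And>u v. u \<in> V\<^sub>1 \<Longrightarrow> v \<in> V\<^sub>1 \<Longrightarrow> E\<^sub>1 u v \<Longrightarrow> wdist V\<^sub>2 E\<^sub>2 w\<^sub>2 u v \<le> enat (w\<^sub>1 u v)"
  shows "wdist V\<^sub>2 E\<^sub>2 w\<^sub>2 i j \<le> wdist V\<^sub>1 E\<^sub>1 w\<^sub>1 i j"
proof (cases "j \<in> V\<^sub>1")
  case True
  have "wdist V\<^sub>2 E\<^sub>2 w\<^sub>2 i j \<le> wdist V\<^sub>1 E\<^sub>1 w\<^sub>1 i j + wdist V\<^sub>2 E\<^sub>2 w\<^sub>2 j j"
  proof (rule potential_le_wdist)
    fix u v assume "u \<in> V\<^sub>1" "v \<in> V\<^sub>1" "E\<^sub>1 u v"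
    then have "wdist V\<^sub>2 E\<^sub>2 w\<^sub>2 u v \<le> enat (w\<^sub>1 u v)" by (rule assms(2))
    then show "wdist V\<^sub>2 E\<^sub>2 w\<^sub>2 u j \<le> enat (w\<^sub>1 u v) + wdist V\<^sub>2 E\<^sub>2 w\<^sub>2 v j"
      by (rule order_trans[OF wdist_triangle add_right_mono])
  qed
  then show ?thesis using True assms(1) by (simp add: wdist_refl subset_iff)
next
  case False
  then have "walks V\<^sub>1 E\<^sub>1 i j = {}" using walks_endpoints_in by blast
  then show ?thesis by (simp add: wdist_def)
qed

locale phi2_solution =
  fixes n :: nat and D :: "nat \<Rightarrow> nat \<Rightarrow> nat" and X :: "nat \<Rightarrow> nat \<Rightarrow> bool"
  assumes distance_matrix: "is_distance_matrix n D"
    and sat: "sat_phi2' n D X"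
begin

lemma D_pos: "i \<in> {1..n} \<Longrightarrow> j \<in> {1..n} \<Longrightarrow> i \<noteq> j \<Longrightarrow> 0 < D i j"
  using distance_matrix unfolding is_distance_matrix_def by blast

lemma D_le_2_if_common_new_neighbour:
  assumes "i \<in> {1..n}" "j \<in> {1..n}" "a \<in> {n+1, n+2}" "X i a" "X j a"
  shows "D i j \<le> 2"
proof -
  have "2 < D i j \<longrightarrow> (\<not> X i (n+1) \<or> \<not> X j (n+1)) \<and> (\<not> X i (n+2) \<or> \<not> X j (n+2))"
    using sat assms(1,2) unfolding sat_phi2'_def by blast
  then show ?thesis using assms(3-5) by auto
qed

lemma D_le_3_if_distinct_new_neighbours:
  assumes "i \<in> {1..n}" "j \<in> {1..n}" "a \<in> {n+1, n+2}" "b \<in> {n+1, n+2}" "a \<noteq> b" "X i a" "X j b"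
  shows "D i j \<le> 3"
proof -
  have "3 < D i j \<longrightarrow> (\<not> X i (n+1) \<or> \<not> X j (n+2)) \<and> (\<not> X i (n+2) \<or> \<not> X j (n+1))"
    using sat assms(1,2) unfolding sat_phi2'_def by blast
  then show ?thesis using assms(3-7) by auto
qed

lemma skel_dist_le_D: "u \<in> {1..n} \<Longrightarrow> v \<in> {1..n} \<Longrightarrow> D u v \<le> q \<Longrightarrow> skel_dist n D q u v \<le> D u v"
  unfolding skel_dist_def by (cases "u = v") (simp_all add: wdist_refl wdist_edge)

lemma ext_edge_in: "ext_edge n D X u v \<Longrightarrow> u \<in> {1..n+2} \<and> v \<in> {1..n+2}"
  by (auto simp: ext_edge_def)

lemma ext_dist_edge: "ext_edge n D X u v \<Longrightarrow> ext_dist n D X u v \<le> 1"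
  using ext_edge_in wdist_edge[of u "{1..n+2}" v "ext_edge n D X" "\<lambda>_ _. 1"]
  by (simp add: ext_dist_def one_enat_def)

lemma ext_dist_le_dG: "ext_dist n D X i j \<le> dG n D i j"
  unfolding dG_def ext_dist_def
proof (rule wdist_le_wdist_of_edges)
  fix u v assume "u \<in> {1..n}" "v \<in> {1..n}" "D u v = 1"
  then show "wdist {1..n+2} (ext_edge n D X) (\<lambda>_ _. 1) u v \<le> enat 1"
    using ext_dist_edge[unfolded ext_dist_def] by (simp add: ext_edge_def one_enat_def)
qed auto

lemma ext_dist_le_2_if_common_new_neighbour:
  assumes "u \<in> {1..n}" "v \<in> {1..n}" "a \<in> {n+1, n+2}" "X u a" "X v a"
  shows "ext_dist n D X u v \<le> 2"
proof -
  have "ext_edge n D X u a" "ext_edge n D X a v"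
    using assms by (auto simp: ext_edge_def)
  have "ext_dist n D X u v \<le> ext_dist n D X u a + ext_dist n D X a v"
    unfolding ext_dist_def by (rule wdist_triangle)
  also have "\<dots> \<le> 1 + 1"
    by (intro add_mono ext_dist_edge) fact+
  finally show ?thesis by simp
qed

lemma ext_dist_le_3_if_distinct_new_neighbours:
  assumes "u \<in> {1..n}" "v \<in> {1..n}" "a \<in> {n+1, n+2}" "b \<in> {n+1, n+2}" "a \<noteq> b" "X u a" "X v b"
  shows "ext_dist n D X u v \<le> 3"
proof -
  have "ext_edge n D X u a" "ext_edge n D X a b" "ext_edge n D X b v"
    using assms by (auto simp: ext_edge_def)
  have "ext_dist n D X u v \<le> ext_dist n D X u a + (ext_dist n D X a b + ext_dist n D X b v)"
    unfolding ext_dist_def by (meson add_left_mono order_trans wdist_triangle)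
  also have "\<dots> \<le> 1 + (1 + 1)"
    by (intro add_mono ext_dist_edge) fact+
  finally show ?thesis by simp
qed

lemma ext_dist_le_D_if_le_2:
  assumes "u \<in> {1..n}" "v \<in> {1..n}" "u \<noteq> v" "D u v \<le> 2"
  shows "ext_dist n D X u v \<le> D u v"
proof -
  consider "D u v = 1" | "D u v = 2" using D_pos assms by fastforce
  then show ?thesis
  proof cases
    case 1
    then show ?thesis using ext_dist_edge assms by (simp add: ext_edge_def one_enat_def)
  next
    case 2
    show ?thesis
    proof (cases "2 < dG n D u v")
      case True
      then obtain a where "a \<in> {n+1, n+2}" "X u a" "X v a"
        using sat assms 2 unfolding sat_phi2'_def by blast
      then have "ext_dist n D X u v \<le> 2"
        using ext_dist_le_2_if_common_new_neighbour assms by blast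
      then show ?thesis using 2 by (simp add: numeral_eq_enat)
    next
      case False
      then have "dG n D u v \<le> 2" by simp
      then show ?thesis using order_trans[OF ext_dist_le_dG] 2 by (simp add: numeral_eq_enat)
    qed
  qed
qed

lemma ext_dist_le_skel_dist_2: "ext_dist n D X i j \<le> skel_dist n D 2 i j"
  unfolding skel_dist_def ext_dist_def
  using ext_dist_le_D_if_le_2[unfolded ext_dist_def] by (intro wdist_le_wdist_of_edges) auto

lemma ext_dist_le_D_if_le_3:
  assumes "u \<in> {1..n}" "v \<in> {1..n}" "u \<noteq> v" "D u v \<le> 3"
  shows "ext_dist n D X u v \<le> D u v"
proof (cases "D u v \<le> 2")
  case True
  then show ?thesis using ext_dist_le_D_if_le_2 assms by blast
next
  case False
  with assms have 3: "D u v = 3" by simp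
  show ?thesis
  proof (cases "3 < skel_dist n D 2 u v")
    case True
    then have "(X u (n+1) \<and> X v (n+2)) \<or> (X u (n+2) \<and> X v (n+1))"
      using sat assms(1,2) 3 unfolding sat_phi2'_def by blast
    then have "ext_dist n D X u v \<le> 3"
      using ext_dist_le_3_if_distinct_new_neighbours[OF assms(1,2)] by fastforce
    then show ?thesis using 3 by (simp add: numeral_eq_enat)
  next
    case False
    then have "skel_dist n D 2 u v \<le> 3" by simp
    then show ?thesis using order_trans[OF ext_dist_le_skel_dist_2] 3 by (simp add: numeral_eq_enat)
  qed
qed

lemma ext_dist_le_skel_dist_3: "ext_dist n D X i j \<le> skel_dist n D 3 i j"
  unfolding skel_dist_def ext_dist_def
  using ext_dist_le_D_if_le_3[unfolded ext_dist_def] by (intro wdist_le_wdist_of_edges) auto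

definition attachments :: "(nat \<times> nat) set" where
  "attachments = {(w, b). w \<in> {1..n} \<and> b \<in> {n+1, n+2} \<and> X w b}"

definition potential :: "nat \<Rightarrow> nat \<Rightarrow> enat" where
  "potential j x = (if x \<in> {1..n} then skel_dist n D 3 x j
     else (INF (w, b) \<in> attachments. skel_dist n D 3 w j + (if b = x then 1 else 2)))"

lemma skel_dist_3_triangle: "skel_dist n D 3 x j \<le> skel_dist n D 3 x w + skel_dist n D 3 w j"
  unfolding skel_dist_def by (rule wdist_triangle)

lemma potential_new_attained:
  assumes "a \<notin> {1..n}" "attachments \<noteq> {}"
  obtains w b where "(w, b) \<in> attachments"
    and "potential j a = skel_dist n D 3 w j + (if b = a then 1 else 2)"
proof -
  obtain p where "p \<in> attachments" and
    "(INF (w, b) \<in> attachments. skel_dist n D 3 w j + (if b = a then 1 else 2)) =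
     (case p of (w, b) \<Rightarrow> skel_dist n D 3 w j + (if b = a then 1 else 2))"
    by (rule INF_enat_attained[OF assms(2)])
  moreover obtain w b where "p = (w, b)" by (cases p)
  ultimately show ?thesis using assms(1) by (intro that[of w b]) (auto simp: potential_def)
qed

lemma potential_old_old:
  assumes "x \<in> {1..n}" "y \<in> {1..n}" "D x y = 1"
  shows "potential j x \<le> potential j y + 1"
proof -
  have "skel_dist n D 3 x j \<le> skel_dist n D 3 x y + skel_dist n D 3 y j"
    by (rule skel_dist_3_triangle)
  also have "\<dots> \<le> 1 + skel_dist n D 3 y j"
    using skel_dist_le_D[OF assms(1,2), of 3] assms(3) by (intro add_right_mono) (simp add: one_enat_def)
  finally show ?thesis using assms by (simp add: potential_def add.commute)
qed

lemma potential_old_new: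
  assumes "x \<in> {1..n}" "a \<in> {n+1, n+2}" "X x a"
  shows "potential j x \<le> potential j a + 1"
proof -
  have "attachments \<noteq> {}" using assms by (auto simp: attachments_def)
  moreover have "a \<notin> {1..n}" using assms(2) by auto
  ultimately obtain w b where wb: "(w, b) \<in> attachments"
    and min: "potential j a = skel_dist n D 3 w j + (if b = a then 1 else 2)"
    using potential_new_attained by blast
  have w: "w \<in> {1..n}" "b \<in> {n+1, n+2}" "X w b" using wb by (auto simp: attachments_def)
  have D_bound: "D x w \<le> (if b = a then 2 else 3)"
    using D_le_2_if_common_new_neighbour D_le_3_if_distinct_new_neighbours assms w by auto
  then have "skel_dist n D 3 x w \<le> enat (D x w)"
    by (intro skel_dist_le_D assms(1) w(1)) (simp split: if_splits)
  also have "\<dots> \<le> (if b = a then 1 else 2) + 1"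
    using D_bound by (cases "b = a") (simp_all add: numeral_eq_enat one_enat_def)
  finally have "skel_dist n D 3 x w \<le> (if b = a then 1 else 2) + 1" .
  then have "skel_dist n D 3 x j \<le> ((if b = a then 1 else 2) + 1) + skel_dist n D 3 w j"
    using skel_dist_3_triangle by (meson add_right_mono order_trans)
  then show ?thesis using assms(1) min by (simp add: potential_def ac_simps)
qed

lemma potential_new_old:
  assumes "a \<in> {n+1, n+2}" "y \<in> {1..n}" "X y a"
  shows "potential j a \<le> potential j y + 1"
proof -
  have "(y, a) \<in> attachments" using assms by (simp add: attachments_def)
  then show ?thesis
    using assms by (auto simp: potential_def intro!: INF_lower2)
qed

lemma potential_new_new:
  assumes "a \<in> {n+1, n+2}" "b \<in> {n+1, n+2}" "a \<noteq> b"
  shows "potential j a \<le> potential j b + 1"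
proof (cases "attachments = {}")
  case False
  moreover have "b \<notin> {1..n}" using assms(2) by auto
  ultimately obtain w c where wc: "(w, c) \<in> attachments"
    and min: "potential j b = skel_dist n D 3 w j + (if c = b then 1 else 2)"
    using potential_new_attained by blast
  have "c = a \<or> c = b" using wc assms by (auto simp: attachments_def)
  then have "skel_dist n D 3 w j + (if c = a then 1 else 2) \<le> potential j b + 1"
    using assms(3) min by (auto simp: add.assoc one_add_one)
  moreover have "potential j a \<le> skel_dist n D 3 w j + (if c = a then 1 else 2)"
    using wc assms(1) by (auto simp: potential_def intro!: INF_lower2)
  ultimately show ?thesis by (rule order_trans[rotated])
qed (use assms in \<open>auto simp: potential_def\<close>)

lemma potential_step:
  assumes "ext_edge n D X x y"
  shows "potential j x \<le> enat 1 + potential j y"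
proof -
  have "potential j x \<le> potential j y + 1"
    using assms potential_old_old potential_old_new potential_new_old potential_new_new
    unfolding ext_edge_def by auto
  then show ?thesis by (simp add: add.commute one_enat_def)
qed

lemma skel_dist_3_le_ext_dist:
  assumes "i \<in> {1..n}" "j \<in> {1..n}"
  shows "skel_dist n D 3 i j \<le> ext_dist n D X i j"
proof -
  have "potential j i \<le> ext_dist n D X i j + potential j j"
    unfolding ext_dist_def using potential_step by (rule potential_le_wdist)
  then show ?thesis
    using assms by (simp add: potential_def skel_dist_def wdist_refl)
qed

end

theorem mainTheorem16:
  fixes n :: nat and D :: "nat \<Rightarrow> nat \<Rightarrow> nat" and X :: "nat \<Rightarrow> nat \<Rightarrow> bool"
  assumes "is_distance_matrix n D"
    and "sat_phi2' n D X"
  shows "\<forall>i\<in>{1..n}. \<forall>j\<in>{1..n}. ext_dist n D X i j = skel_dist n D 3 i j"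
proof -
  interpret phi2_solution n D X using assms by unfold_locales
  show ?thesis
    using ext_dist_le_skel_dist_3 skel_dist_3_le_ext_dist by (blast intro: antisym)
qed

end
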